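(* Let $X$ be a real random variable such that $\mathbb{E}[e^{-X}]$ is finite. Then $X$ has the standard Gumbel distribution $\mathcal{G}(0,1)$ if and only if \[ \mathbb{E}[f'(X)]=\mathbb{E}\big[e^{-X}f'(X+Y)\big]\quad\text{for all } f\in\mathrm{Lip}_{[2]}(\mathbb{R}), \] where $Y$ has the exponential distribution $\mathcal{E}(1)$ and is independent of $X$.
   Context: The standard Gumbel distribution $\mathcal{G}(0,1)$ has density $x\mapsto e^{-(x+e^{-x})}$ on $\mathbb{R}$. $\mathrm{Lip}_{[2]}(\mathbb{R})$ is the set of Lipschitz functions $f:\mathbb{R}\to\mathbb{R}$ whose derivative $f'$ admits a Lipschitz representative (functions need not be bounded). *)

theory Defs
  imports "HOL-Probability.Probability"
begin

definition gumbel_density :: "real \<Rightarrow> real" where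
  "gumbel_density x = exp (- (x + exp (- x)))"

definition Lip2 :: "(real \<Rightarrow> real) \<Rightarrow> (real \<Rightarrow> real) \<Rightarrow> bool" where
  "Lip2 f f' \<longleftrightarrow> (\<exists>L. L-lipschitz_on UNIV f) \<and> (\<exists>L. L-lipschitz_on UNIV f')
     \<and> (\<forall>x. (f has_real_derivative f' x) (at x))"

end

theory Submission
  imports Defs
begin

(* Let F be the distribution function of X. Integrating out Y ~ Exp(1) and substituting t = X + Y
   gives E[exp(-X) h(X + Y)] = \<integral> h(t) exp(-t) F(t) dt for every bounded measurable h (Fubini).
   So the identity says that \<integral> f' dP_X = \<integral> f'(t) exp(-t) F(t) dt for all f in Lip_[2]. Since
   cos(s x) and sin(s x) are such derivatives, Levy's uniqueness theorem makes this equivalent to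
   P_X having density exp(-t) F(t). Then F' = exp(-t) F, so F(t) exp(exp(-t)) is constant and,
   as F tends to 1 at infinity, F(t) = exp(-exp(-t)): X is Gumbel. Conversely the Gumbel
   distribution function satisfies F' = exp(-t) F. *)

lemma lipschitz_on_UNIV_if_abs_deriv_le:
  fixes f f' :: "real \<Rightarrow> real"
  assumes "\<And>x. (f has_real_derivative f' x) (at x)" and "\<And>x. \<bar>f' x\<bar> \<le> C"
  shows "C-lipschitz_on UNIV f"
proof (rule bounded_derivative_imp_lipschitz)
  show "(f has_derivative (*) (f' x)) (at x within UNIV)" for x
    using assms(1) by (simp add: has_field_derivative_def mult.commute)
  show "onorm ((*) (f' x)) \<le> C" for x
    by (rule onorm_le) (simp add: abs_mult mult_right_mono assms(2))
  show "0 \<le> C" using abs_ge_zero order_trans assms(2) by blast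
qed simp

lemma abs_deriv_le_if_lipschitz_on:
  fixes f :: "real \<Rightarrow> real"
  assumes "L-lipschitz_on UNIV f" and "(f has_real_derivative D) (at x)"
  shows "\<bar>D\<bar> \<le> L"
proof -
  have "((\<lambda>h. \<bar>(f (x + h) - f x) / h\<bar>) \<longlongrightarrow> \<bar>D\<bar>) (at 0)"
    using assms(2) by (intro tendsto_rabs) (simp add: DERIV_def)
  moreover have "\<bar>(f (x + h) - f x) / h\<bar> \<le> L" if "h \<noteq> 0" for h
    using lipschitz_onD[OF assms(1), of "x + h" x] that
    by (simp add: dist_real_def divide_le_eq)
  then have "\<forall>\<^sub>F h in at 0. \<bar>(f (x + h) - f x) / h\<bar> \<le> L"
    by (simp add: eventually_at_filter)
  ultimately show ?thesis by (rule tendsto_upperbound) simp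
qed

lemma Lip2I_bounded_derivatives:
  fixes f f' f'' :: "real \<Rightarrow> real"
  assumes "\<And>x. (f has_real_derivative f' x) (at x)" and "\<And>x. (f' has_real_derivative f'' x) (at x)"
    and "\<And>x. \<bar>f' x\<bar> \<le> A" and "\<And>x. \<bar>f'' x\<bar> \<le> B"
  shows "Lip2 f f'"
  unfolding Lip2_def using assms lipschitz_on_UNIV_if_abs_deriv_le by blast

lemma Lip2_abs_deriv_bounded:
  assumes "Lip2 f f'"
  obtains B where "\<And>x. \<bar>f' x\<bar> \<le> B"
  using assms abs_deriv_le_if_lipschitz_on unfolding Lip2_def by metis

lemma Lip2_deriv_measurable:
  assumes "Lip2 f f'"
  shows "f' \<in> borel_measurable borel"
  using assms unfolding Lip2_def
  by (metis borel_measurable_continuous_onI lipschitz_on_continuous_on)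

lemma ex_Lip2_cos: "\<exists>f. Lip2 f (\<lambda>x. cos (s * x))"
proof (cases "s = 0")
  case True
  have "Lip2 (\<lambda>x. x) (\<lambda>x. 1)"
    by (rule Lip2I_bounded_derivatives[where f''="\<lambda>x. 0"]) (auto intro: derivative_eq_intros)
  with True show ?thesis by auto
next
  case False
  have "Lip2 (\<lambda>x. sin (s * x) / s) (\<lambda>x. cos (s * x))"
    by (rule Lip2I_bounded_derivatives[where f''="\<lambda>x. - s * sin (s * x)" and A=1 and B="\<bar>s\<bar>"])
      (use False in \<open>auto intro!: derivative_eq_intros simp: abs_mult mult_left_le\<close>)
  then show ?thesis by blast
qed

lemma ex_Lip2_sin: "\<exists>f. Lip2 f (\<lambda>x. sin (s * x))"
proof (cases "s = 0")
  case True
  have "Lip2 (\<lambda>x. 0) (\<lambda>x. 0)"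
    by (rule Lip2I_bounded_derivatives[where f''="\<lambda>x. 0"]) auto
  with True show ?thesis by auto
next
  case False
  have "Lip2 (\<lambda>x. - cos (s * x) / s) (\<lambda>x. sin (s * x))"
    by (rule Lip2I_bounded_derivatives[where f''="\<lambda>x. s * cos (s * x)" and A=1 and B="\<bar>s\<bar>"])
      (use False in \<open>auto intro!: derivative_eq_intros simp: abs_mult mult_left_le\<close>)
  then show ?thesis by blast
qed

lemma (in real_distribution) char_eq_integral_cos_sin:
  "char M s = complex_of_real (\<integral>x. cos (s * x) \<partial>M) + \<i> * complex_of_real (\<integral>x. sin (s * x) \<partial>M)"
proof -
  have "integrable M (\<lambda>x. cos (s * x))" "integrable M (\<lambda>x. sin (s * x))"
    by (auto intro: integrable_const_bound[where B=1])
  moreover have "iexp (s * x) = complex_of_real (cos (s * x)) + \<i> * complex_of_real (sin (s * x))" for x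
    by (simp only: cis_conv_exp[symmetric]) (simp add: complex_eq_iff)
  ultimately show ?thesis
    by (simp add: char_def complex_of_real_integrable_eq)
qed

lemma real_distribution_eq_density_if_cos_sin:
  fixes q :: "real \<Rightarrow> real"
  assumes "real_distribution \<mu>" and [measurable]: "q \<in> borel_measurable borel" and q_nonneg: "\<And>t. 0 \<le> q t"
    and cos: "\<And>s. (\<integral>x. cos (s * x) \<partial>\<mu>) = (\<integral>t. cos (s * t) * q t \<partial>lborel)"
    and sin: "\<And>s. (\<integral>x. sin (s * x) \<partial>\<mu>) = (\<integral>t. sin (s * t) * q t \<partial>lborel)"
  shows "\<mu> = density lborel q"
proof -
  interpret real_distribution \<mu> by fact
  have q_total: "(\<integral>t. q t \<partial>lborel) = 1"
    using cos[of 0] prob_space by simp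
  \<comment> \<open>a non-integrable function has Bochner integral 0\<close>
  then have "integrable lborel q"
    using not_integrable_integral_eq by fastforce
  then have "emeasure (density lborel q) UNIV = 1"
    using q_total by (simp add: emeasure_density nn_integral_eq_integral q_nonneg)
  then have Q: "real_distribution (density lborel q)"
    by (auto simp: real_distribution_def real_distribution_axioms_def intro!: prob_spaceI)
  have "(\<integral>x. g x \<partial>density lborel q) = (\<integral>t. g t * q t \<partial>lborel)"
    if [measurable]: "g \<in> borel_measurable borel" for g :: "real \<Rightarrow> real"
    by (subst integral_density) (auto simp: q_nonneg mult.commute)
  then have "char \<mu> = char (density lborel q)"
    by (simp add: fun_eq_iff char_eq_integral_cos_sin real_distribution.char_eq_integral_cos_sin[OF Q] cos sin)
  then show ?thesis
    by (rule Levy_uniqueness[OF \<open>real_distribution \<mu>\<close> Q])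
qed

lemma real_distribution_eq_density_iff_Lip2:
  fixes q :: "real \<Rightarrow> real"
  assumes "real_distribution \<mu>" and [measurable]: "q \<in> borel_measurable borel" and q_nonneg: "\<And>t. 0 \<le> q t"
  shows "\<mu> = density lborel q \<longleftrightarrow>
    (\<forall>f f'. Lip2 f f' \<longrightarrow> (\<integral>x. f' x \<partial>\<mu>) = (\<integral>t. f' t * q t \<partial>lborel))"
proof
  assume "\<mu> = density lborel q"
  then show "\<forall>f f'. Lip2 f f' \<longrightarrow> (\<integral>x. f' x \<partial>\<mu>) = (\<integral>t. f' t * q t \<partial>lborel)"
    using Lip2_deriv_measurable by (auto simp: integral_density q_nonneg mult.commute)
next
  assume "\<forall>f f'. Lip2 f f' \<longrightarrow> (\<integral>x. f' x \<partial>\<mu>) = (\<integral>t. f' t * q t \<partial>lborel)"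
  then show "\<mu> = density lborel q"
    using ex_Lip2_cos ex_Lip2_sin by (intro real_distribution_eq_density_if_cos_sin assms) metis+
qed

lemma borel_measurable_cdf [measurable]:
  assumes "real_distribution \<mu>"
  shows "cdf \<mu> \<in> borel_measurable borel"
proof -
  interpret real_distribution \<mu> by fact
  show ?thesis by (rule borel_measurable_mono) (simp add: mono_def cdf_nondecreasing)
qed

lemma cdf_diff_eq_integral_density:
  fixes q :: "real \<Rightarrow> real"
  assumes "real_distribution \<mu>" and \<mu>: "\<mu> = density lborel q"
    and q_nonneg: "\<And>t. 0 \<le> q t" and q_cont: "continuous_on UNIV q" and "a \<le> b"
  shows "cdf \<mu> b - cdf \<mu> a = integral {a..b} q"
proof -
  interpret real_distribution \<mu> by fact
  have [measurable]: "q \<in> borel_measurable borel"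
    using q_cont by (rule borel_measurable_continuous_onI)
  have q_int: "q integrable_on {c..d}" for c d
    by (rule integrable_continuous_interval) (simp add: continuous_on_subset[OF q_cont])
  have Icc: "measure \<mu> {c..d} = integral {c..d} q" for c d
  proof -
    have "emeasure \<mu> {c..d} = (\<integral>\<^sup>+t. ennreal (indicator {c..d} t * q t) \<partial>lborel)"
      unfolding \<mu> by (subst emeasure_density) (auto simp: indicator_def intro!: nn_integral_cong)
    also have "\<dots> = ennreal (integral {c..d} q)"
      by (intro nn_integral_has_integral_lebesgue q_nonneg integrable_integral[OF q_int])
    finally show ?thesis
      by (simp add: measure_def integral_nonneg q_int q_nonneg)
  qed
  have "cdf \<mu> b - cdf \<mu> a = measure \<mu> ({a..b} - {a..a})"
    using \<open>a \<le> b\<close> by (cases "a = b") (auto simp: cdf_diff_eq Diff_eq intro!: arg_cong[where f="measure \<mu>"])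
  also have "\<dots> = measure \<mu> {a..b} - measure \<mu> {a..a}"
    by (rule finite_measure_Diff) (use \<open>a \<le> b\<close> in auto)
  also have "\<dots> = integral {a..b} q"
    unfolding Icc by simp
  finally show ?thesis .
qed

lemma cdf_has_real_derivative_density:
  fixes q :: "real \<Rightarrow> real"
  assumes "real_distribution \<mu>" and "\<mu> = density lborel q"
    and "\<And>t. 0 \<le> q t" and q_cont: "continuous_on UNIV q"
  shows "(cdf \<mu> has_real_derivative q x) (at x)"
proof -
  have "((\<lambda>y. integral {x - 1..y} q) has_real_derivative q x) (at x)"
    using integral_has_real_derivative[OF continuous_on_subset[OF q_cont], of "x - 1" "x + 1" x]
    by (simp add: at_within_Icc_at)
  then have "((\<lambda>y. cdf \<mu> (x - 1) + integral {x - 1..y} q) has_real_derivative q x) (at x)"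
    by (auto intro: derivative_eq_intros)
  then show ?thesis
  proof (rule has_field_derivative_transform_within_open[where S="{x - 1<..}"])
    show "cdf \<mu> (x - 1) + integral {x - 1..y} q = cdf \<mu> y" if "y \<in> {x - 1<..}" for y
      using cdf_diff_eq_integral_density[OF assms, of "x - 1" y] that by simp
  qed auto
qed

lemma eq_if_has_real_derivative_zero_tendsto:
  fixes g :: "real \<Rightarrow> real"
  assumes "\<And>x. (g has_real_derivative 0) (at x)" and "(g \<longlongrightarrow> c) F" and "F \<noteq> bot"
  shows "g t = c"
proof -
  have "g = (\<lambda>_. g t)" using DERIV_isconst_all assms(1) by blast
  with assms(2,3) show ?thesis by (metis tendsto_const_iff)
qed

lemma gumbel_density_eq: "gumbel_density t = exp (-t) * exp (- exp (-t))"
  by (simp add: gumbel_density_def mult_exp_exp)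

lemma gumbel_density_continuous: "continuous_on UNIV gumbel_density"
  unfolding gumbel_density_def by (intro continuous_intros)

lemma cdf_gumbel:
  assumes "real_distribution \<mu>" and "\<mu> = density lborel gumbel_density"
  shows "cdf \<mu> t = exp (- exp (-t))"
proof -
  interpret real_distribution \<mu> by fact
  have "cdf \<mu> t - exp (- exp (-t)) = 0"
  proof (rule eq_if_has_real_derivative_zero_tendsto[where g="\<lambda>t. cdf \<mu> t - exp (- exp (-t))" and F=at_bot])
    show "((\<lambda>t. cdf \<mu> t - exp (- exp (-t))) has_real_derivative 0) (at x)" for x
      using cdf_has_real_derivative_density[OF assms _ gumbel_density_continuous, of x]
      by (auto intro!: derivative_eq_intros simp: gumbel_density_def mult_exp_exp)
    have "((\<lambda>t::real. exp (- exp (-t))) \<longlongrightarrow> 0) at_bot"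
      using filterlim_compose[OF exp_at_bot filterlim_compose[OF filterlim_uminus_at_bot_at_top
          filterlim_compose[OF exp_at_top filterlim_uminus_at_top_at_bot]]]
      by (simp add: o_def)
    then show "((\<lambda>t. cdf \<mu> t - exp (- exp (-t))) \<longlongrightarrow> 0) at_bot"
      using cdf_lim_at_bot tendsto_diff by fastforce
  qed simp
  then show ?thesis by simp
qed

lemma cdf_continuous_if_density:
  fixes q :: "real \<Rightarrow> real"
  assumes "real_distribution \<mu>" and "\<mu> = density lborel q" and [measurable]: "q \<in> borel_measurable borel"
  shows "isCont (cdf \<mu>) x"
proof -
  interpret real_distribution \<mu> by fact
  have "{x} \<in> null_sets lborel" by (rule countable_imp_null_set_lborel) simp
  then have "emeasure \<mu> {x} = 0"
    by (simp add: assms(2) emeasure_density nn_integral_null_set)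
  then show ?thesis by (simp add: isCont_cdf measure_def)
qed

lemma cdf_gumbel_if_density_exp_cdf:
  assumes "real_distribution \<mu>" and "\<mu> = density lborel (\<lambda>t. exp (-t) * cdf \<mu> t)"
  shows "cdf \<mu> t = exp (- exp (-t))"
proof -
  interpret real_distribution \<mu> by fact
  let ?F = "cdf \<mu>"
  note [measurable] = borel_measurable_cdf[OF assms(1)]
  have "(\<lambda>t. exp (-t) * ?F t) \<in> borel_measurable borel" by measurable
  note F_cont = cdf_continuous_if_density[OF assms this]
  have F': "(?F has_real_derivative exp (-x) * ?F x) (at x)" for x
  proof (rule cdf_has_real_derivative_density[OF assms])
    show "0 \<le> exp (-t) * ?F t" for t by (simp add: cdf_nonneg)
    show "continuous_on UNIV (\<lambda>t. exp (-t) * ?F t)"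
      using F_cont
      by (intro continuous_at_imp_continuous_on ballI continuous_intros) auto
  qed
  have "?F t * exp (exp (-t)) = 1"
  proof (rule eq_if_has_real_derivative_zero_tendsto[where g="\<lambda>t. ?F t * exp (exp (-t))" and F=at_top])
    show "((\<lambda>t. ?F t * exp (exp (-t))) has_real_derivative 0) (at x)" for x
      by (rule derivative_eq_intros F' refl | simp add: algebra_simps)+
    have "((\<lambda>t::real. exp (- t)) \<longlongrightarrow> 0) at_top"
      using filterlim_compose[OF exp_at_bot filterlim_uminus_at_bot_at_top] by (simp add: o_def)
    then show "((\<lambda>t. ?F t * exp (exp (-t))) \<longlongrightarrow> 1) at_top"
      using tendsto_mult[OF cdf_lim_at_top_prob tendsto_exp] by fastforce
  qed simp
  then show ?thesis by (simp add: exp_minus field_simps)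
qed

lemma gumbel_iff_density_exp_cdf:
  assumes "real_distribution \<mu>"
  shows "\<mu> = density lborel gumbel_density \<longleftrightarrow> \<mu> = density lborel (\<lambda>t. exp (-t) * cdf \<mu> t)"
proof
  assume "\<mu> = density lborel gumbel_density"
  with cdf_gumbel[OF assms] show "\<mu> = density lborel (\<lambda>t. exp (-t) * cdf \<mu> t)"
    by (simp add: gumbel_density_eq)
next
  assume "\<mu> = density lborel (\<lambda>t. exp (-t) * cdf \<mu> t)"
  with cdf_gumbel_if_density_exp_cdf[OF assms] show "\<mu> = density lborel gumbel_density"
    by (simp add: gumbel_density_eq)
qed

lemma exponential_shift_integral:
  fixes g :: "real \<Rightarrow> real"
  assumes [measurable]: "g \<in> borel_measurable borel"
  shows "integrable (density lborel (exponential_density 1)) (\<lambda>y. g (x + y)) \<longleftrightarrow>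
      integrable lborel (\<lambda>t. indicator {x..} t * g t * exp (-t))"
    and "exp (-x) * (\<integral>y. g (x + y) \<partial>density lborel (exponential_density 1)) =
      (\<integral>t. indicator {x..} t * g t * exp (-t) \<partial>lborel)"
proof -
  define R where "R t = exp x * (indicator {x..} t * g t * exp (-t))" for t
  have R_shift: "exponential_density 1 y * g (x + y) = R (x + 1 * y)" for y
    by (simp add: R_def exponential_density_def indicator_def mult_exp_exp)
  have "integrable (density lborel (exponential_density 1)) (\<lambda>y. g (x + y)) \<longleftrightarrow>
      integrable lborel (\<lambda>y. R (x + 1 * y))"
    by (subst integrable_density) (simp_all add: exponential_density_nonneg R_shift)
  also have "\<dots> \<longleftrightarrow> integrable lborel R"
    by (rule lborel_integrable_real_affine_iff) simp
  also have "\<dots> \<longleftrightarrow> integrable lborel (\<lambda>t. indicator {x..} t * g t * exp (-t))"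
    unfolding R_def by simp
  finally show "integrable (density lborel (exponential_density 1)) (\<lambda>y. g (x + y)) \<longleftrightarrow>
      integrable lborel (\<lambda>t. indicator {x..} t * g t * exp (-t))" .
  have "(\<integral>y. g (x + y) \<partial>density lborel (exponential_density 1)) = (\<integral>y. R (x + 1 * y) \<partial>lborel)"
    by (subst integral_density) (simp_all add: exponential_density_nonneg R_shift)
  also have "\<dots> = (\<integral>t. R t \<partial>lborel)"
    using lborel_integral_real_affine[of 1 R x] by simp
  also have "\<dots> = exp x * (\<integral>t. indicator {x..} t * g t * exp (-t) \<partial>lborel)"
    by (simp add: R_def)
  finally show "exp (-x) * (\<integral>y. g (x + y) \<partial>density lborel (exponential_density 1)) =
      (\<integral>t. indicator {x..} t * g t * exp (-t) \<partial>lborel)"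
    by (simp add: exp_minus field_simps)
qed

lemma integral_exp_shift_product:
  fixes \<mu> :: "real measure" and h :: "real \<Rightarrow> real"
  assumes "real_distribution \<mu>" and exp_int: "integrable \<mu> (\<lambda>x. exp (-x))"
    and [measurable]: "h \<in> borel_measurable borel" and h_bound: "\<And>t. \<bar>h t\<bar> \<le> B"
  shows "(\<integral>p. exp (- fst p) * h (fst p + snd p) \<partial>(\<mu> \<Otimes>\<^sub>M density lborel (exponential_density 1))) =
    (\<integral>t. h t * (exp (-t) * cdf \<mu> t) \<partial>lborel)"
proof -
  interpret \<mu>: real_distribution \<mu> by fact
  let ?\<nu> = "density lborel (exponential_density (1::real))"
  interpret \<nu>: prob_space ?\<nu> by (rule prob_space_exponential_density) simp
  interpret \<mu>\<nu>: pair_sigma_finite \<mu> ?\<nu> ..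
  interpret \<mu>L: pair_sigma_finite \<mu> lborel ..
  have [measurable_cong]: "sets \<mu> = sets borel" "sets ?\<nu> = sets borel"
    by simp_all
  have [measurable]: "Measurable.pred (borel \<Otimes>\<^sub>M borel) (\<lambda>p::real \<times> real. snd p \<in> {fst p..})"
    unfolding atLeast_iff by measurable
  have B_nonneg: "0 \<le> B" using h_bound[of 0] by linarith
  have shift: "(\<integral>y. exp (-x) * g (x + y) \<partial>?\<nu>) = (\<integral>t. indicator {x..} t * g t * exp (-t) \<partial>lborel)"
    if [measurable]: "g \<in> borel_measurable borel" for g x
    using exponential_shift_integral(2)[OF that] by simp
  have tail: "integrable lborel (\<lambda>t. indicator {x..} t * exp (-t))" for x :: real
    using exponential_shift_integral(1)[where g="\<lambda>_. 1" and x=x] by simp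
  have tail_integral: "(\<integral>t. indicator {x..} t * exp (-t) \<partial>lborel) = exp (-x)" for x :: real
    using exponential_shift_integral(2)[where g="\<lambda>_. 1" and x=x] \<nu>.prob_space by simp
  have "integrable (\<mu> \<Otimes>\<^sub>M ?\<nu>) (\<lambda>p. B * exp (- fst p))"
  proof (rule \<mu>\<nu>.Fubini_integrable)
    show "integrable \<mu> (\<lambda>x. \<integral>y. norm (B * exp (- fst (x, y))) \<partial>?\<nu>)"
      using exp_int B_nonneg by (simp add: \<nu>.prob_space)
  qed auto
  then have int_\<mu>\<nu>: "integrable (\<mu> \<Otimes>\<^sub>M ?\<nu>) (\<lambda>p. exp (- fst p) * h (fst p + snd p))"
  proof (rule Bochner_Integration.integrable_bound)
    show "AE p in \<mu> \<Otimes>\<^sub>M ?\<nu>. norm (exp (- fst p) * h (fst p + snd p)) \<le> norm (B * exp (- fst p))"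
      using h_bound B_nonneg by (intro AE_I2) (simp add: abs_mult mult.commute mult_left_mono)
  qed measurable
  have "integrable (\<mu> \<Otimes>\<^sub>M lborel) (\<lambda>p. B * (indicator {fst p..} (snd p) * exp (- snd p)))"
  proof (rule \<mu>L.Fubini_integrable)
    show "integrable \<mu> (\<lambda>x. \<integral>t. norm (B * (indicator {fst (x, t)..} (snd (x, t)) * exp (- snd (x, t)))) \<partial>lborel)"
      using exp_int B_nonneg by (simp add: abs_mult tail_integral)
    show "AE x in \<mu>. integrable lborel (\<lambda>t. B * (indicator {fst (x, t)..} (snd (x, t)) * exp (- snd (x, t))))"
      using tail by simp
  qed measurable
  then have int_\<mu>L: "integrable (\<mu> \<Otimes>\<^sub>M lborel) (\<lambda>p. indicator {fst p..} (snd p) * h (snd p) * exp (- snd p))"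
  proof (rule Bochner_Integration.integrable_bound)
    show "AE p in \<mu> \<Otimes>\<^sub>M lborel. norm (indicator {fst p..} (snd p) * h (snd p) * exp (- snd p))
        \<le> norm (B * (indicator {fst p..} (snd p) * exp (- snd p)))"
      using h_bound B_nonneg by (intro AE_I2) (simp add: abs_mult indicator_def mult_right_mono)
  qed measurable
  have "(\<integral>p. exp (- fst p) * h (fst p + snd p) \<partial>(\<mu> \<Otimes>\<^sub>M ?\<nu>)) = (\<integral>x. (\<integral>y. exp (-x) * h (x + y) \<partial>?\<nu>) \<partial>\<mu>)"
    using \<mu>\<nu>.integral_fst'[OF int_\<mu>\<nu>] by simp
  also have "\<dots> = (\<integral>x. (\<integral>t. indicator {x..} t * h t * exp (-t) \<partial>lborel) \<partial>\<mu>)"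
    by (simp only: shift[OF \<open>h \<in> borel_measurable borel\<close>])
  also have "\<dots> = (\<integral>t. (\<integral>x. indicator {x..} t * h t * exp (-t) \<partial>\<mu>) \<partial>lborel)"
    using \<mu>L.Fubini_integral[where f="\<lambda>x t. indicator {x..} t * h t * exp (-t)"] int_\<mu>L
    by (simp add: split_beta')
  also have "\<dots> = (\<integral>t. h t * (exp (-t) * cdf \<mu> t) \<partial>lborel)"
  proof (rule Bochner_Integration.integral_cong[OF refl])
    fix t
    have "(\<lambda>x. indicator {x..} t * h t * exp (-t)) = (\<lambda>x. indicator {..t} x * (h t * exp (-t)))"
      by (auto simp: indicator_def)
    then show "(\<integral>x. indicator {x..} t * h t * exp (-t) \<partial>\<mu>) = h t * (exp (-t) * cdf \<mu> t)"
      by (simp add: cdf_def)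
  qed
  finally show ?thesis .
qed

lemma integral_exp_shift_indep:
  fixes M :: "'a measure" and X Y :: "'a \<Rightarrow> real" and h :: "real \<Rightarrow> real"
  assumes "prob_space M" and [measurable]: "X \<in> borel_measurable M"
    and "integrable M (\<lambda>\<omega>. exp (- X \<omega>))"
    and Y: "distributed M lborel Y (exponential_density 1)"
    and "prob_space.indep_var M borel X borel Y"
    and "h \<in> borel_measurable borel" and "\<And>t. \<bar>h t\<bar> \<le> B"
  shows "(\<integral>\<omega>. exp (- X \<omega>) * h (X \<omega> + Y \<omega>) \<partial>M) =
    (\<integral>t. h t * (exp (-t) * cdf (distr M borel X) t) \<partial>lborel)"
proof -
  interpret prob_space M by fact
  have [measurable]: "Y \<in> borel_measurable M"
    using distributed_measurable[OF Y] by simp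
  have "distr M borel Y = density lborel (exponential_density 1)"
    using Y by (simp add: distributed_def distr_cong[OF refl sets_lborel[symmetric]])
  then have XY: "distr M (borel \<Otimes>\<^sub>M borel) (\<lambda>\<omega>. (X \<omega>, Y \<omega>)) =
      distr M borel X \<Otimes>\<^sub>M density lborel (exponential_density 1)"
    using \<open>indep_var borel X borel Y\<close> by (simp add: indep_var_distribution_eq)
  have "(\<integral>\<omega>. exp (- X \<omega>) * h (X \<omega> + Y \<omega>) \<partial>M) =
      (\<integral>p. exp (- fst p) * h (fst p + snd p) \<partial>distr M (borel \<Otimes>\<^sub>M borel) (\<lambda>\<omega>. (X \<omega>, Y \<omega>)))"
    using \<open>h \<in> borel_measurable borel\<close> by (subst integral_distr) auto
  also have "\<dots> = (\<integral>t. h t * (exp (-t) * cdf (distr M borel X) t) \<partial>lborel)"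
    unfolding XY using assms
    by (intro integral_exp_shift_product) (auto simp: integrable_distr_eq)
  finally show ?thesis .
qed

lemma Lip2_integral_exp_shift_indep:
  fixes M :: "'a measure" and X Y :: "'a \<Rightarrow> real"
  assumes "prob_space M" and "X \<in> borel_measurable M"
    and "integrable M (\<lambda>\<omega>. exp (- X \<omega>))"
    and "distributed M lborel Y (exponential_density 1)"
    and "prob_space.indep_var M borel X borel Y"
    and "Lip2 f f'"
  shows "(\<integral>\<omega>. exp (- X \<omega>) * f' (X \<omega> + Y \<omega>) \<partial>M) =
    (\<integral>t. f' t * (exp (-t) * cdf (distr M borel X) t) \<partial>lborel)"
  using Lip2_abs_deriv_bounded[OF assms(6)]
    integral_exp_shift_indep[OF assms(1-5) Lip2_deriv_measurable[OF assms(6)]] by metis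

theorem theorem2p4:
  fixes M :: "'a measure" and X Y :: "'a \<Rightarrow> real"
  assumes "prob_space M"
    and "X \<in> borel_measurable M"
    and "integrable M (\<lambda>\<omega>. exp (- X \<omega>))"
    and "distributed M lborel Y (exponential_density 1)"
    and "prob_space.indep_var M borel X borel Y"
  shows "distributed M lborel X gumbel_density \<longleftrightarrow>
    (\<forall>f f'. Lip2 f f' \<longrightarrow>
       (\<integral>\<omega>. f' (X \<omega>) \<partial>M) = (\<integral>\<omega>. exp (- X \<omega>) * f' (X \<omega> + Y \<omega>) \<partial>M))"
proof -
  interpret prob_space M by fact
  note [measurable] = \<open>X \<in> borel_measurable M\<close>
  define \<mu> where "\<mu> = distr M borel X"
  have \<mu>: "real_distribution \<mu>" by (simp add: \<mu>_def)
  interpret \<mu>: real_distribution \<mu> by fact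
  note [measurable] = borel_measurable_cdf[OF \<mu>]
  have "distributed M lborel X gumbel_density \<longleftrightarrow> \<mu> = density lborel gumbel_density"
    by (simp add: distributed_def \<mu>_def distr_cong[OF refl sets_lborel[symmetric]] gumbel_density_def)
  also have "\<dots> \<longleftrightarrow> \<mu> = density lborel (\<lambda>t. exp (-t) * cdf \<mu> t)"
    by (rule gumbel_iff_density_exp_cdf[OF \<mu>])
  also have "\<dots> \<longleftrightarrow> (\<forall>f f'. Lip2 f f' \<longrightarrow> (\<integral>x. f' x \<partial>\<mu>) = (\<integral>t. f' t * (exp (-t) * cdf \<mu> t) \<partial>lborel))"
    by (rule real_distribution_eq_density_iff_Lip2[OF \<mu>])
      (auto simp: \<mu>.cdf_nonneg)
  also have "\<dots> \<longleftrightarrow> (\<forall>f f'. Lip2 f f' \<longrightarrow>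
      (\<integral>\<omega>. f' (X \<omega>) \<partial>M) = (\<integral>\<omega>. exp (- X \<omega>) * f' (X \<omega> + Y \<omega>) \<partial>M))"
    by (simp add: \<mu>_def integral_distr Lip2_deriv_measurable Lip2_integral_exp_shift_indep[OF assms])
  finally show ?thesis .
qed

end
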